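(* Let $-1<D<C\le 1$ and let $\alpha_1,\alpha_2>0$ satisfy $(\alpha_1-\alpha_2)(1-D^2)\ge e(C-D)(1+|D|)$. Let $f\in\mathcal{A}$ with $f(z)\neq 0$ for $0<|z|<1$, put $A_1=zf'(z)/f(z)$, $A_2=z^2f''(z)/f(z)$, $A_3=z^3f'''(z)/f(z)$, and $$Y_f(z)=1+\alpha_1\,(A_2-A_1^2+A_1)+\alpha_2\,(A_3+2A_2+2A_1^3-2A_1^2-3A_1A_2).$$ If $Y_f(z)\prec \dfrac{1+Cz}{1+Dz}$, then $f\in\mathcal{S}^*_e$.
   Context: $\mathbb{D}=\{z\in\mathbb{C}:|z|<1\}$. $\mathcal{A}$ is the class of analytic functions $f$ on $\mathbb{D}$ of the form $f(z)=z+a_2z^2+a_3z^3+\cdots$. For $g,h$ analytic in $\mathbb{D}$, $g\prec h$ means there is an analytic $w:\mathbb{D}\to\mathbb{D}$ with $w(0)=0$ and $g=h\circ w$. $\mathcal{S}^*_e=\{f\in\mathcal{A}: zf'(z)/f(z)\prec e^z\}$ (starlike functions associated with the exponential function). Note $Y_f(z)=1+\alpha_1 zp'(z)+\alpha_2 z^2p''(z)$ with $p=zf'/f$. *)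

theory Defs
  imports "HOL-Complex_Analysis.Complex_Analysis"
begin

abbreviation unit_disk :: "complex set" where
  "unit_disk \<equiv> ball 0 1"

definition subordinate :: "(complex \<Rightarrow> complex) \<Rightarrow> (complex \<Rightarrow> complex) \<Rightarrow> bool" where
  "subordinate g h \<longleftrightarrow>
     (\<exists>w. w holomorphic_on unit_disk \<and> w 0 = 0 \<and> (\<forall>z\<in>unit_disk. norm (w z) < 1)
          \<and> (\<forall>z\<in>unit_disk. g z = h (w z)))"

definition classA :: "(complex \<Rightarrow> complex) set" where
  "classA = {f. f holomorphic_on unit_disk \<and> f 0 = 0 \<and> deriv f 0 = 1}"

text \<open>z f'(z)/f(z), with its removable value 1 at z = 0.\<close>
definition pfun :: "(complex \<Rightarrow> complex) \<Rightarrow> complex \<Rightarrow> complex" where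
  "pfun f z = (if z = 0 then 1 else z * deriv f z / f z)"

definition starlike_exp :: "(complex \<Rightarrow> complex) set" where
  "starlike_exp = {f \<in> classA. subordinate (pfun f) exp}"

text \<open>The expression Y_f, with its removable value 1 at z = 0.\<close>
definition Yf :: "real \<Rightarrow> real \<Rightarrow> (complex \<Rightarrow> complex) \<Rightarrow> complex \<Rightarrow> complex" where
  "Yf a1 a2 f z =
     (if z = 0 then 1 else
      (let A1 = z * deriv f z / f z;
           A2 = z^2 * (deriv ^^ 2) f z / f z;
           A3 = z^3 * (deriv ^^ 3) f z / f z
       in 1 + of_real a1 * (A2 - A1^2 + A1)
            + of_real a2 * (A3 + 2*A2 + 2*A1^3 - 2*A1^2 - 3*A1*A2)))"

end

theory Submission
  imports Defs
begin

text \<open>With \<open>p = z f'/f\<close> one has \<open>Y\<^sub>f = 1 + \<alpha>\<^sub>1 z p' + \<alpha>\<^sub>2 z\<^sup>2 p''\<close>, so \<open>g = z p'\<close> satisfies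
  \<open>Y\<^sub>f - 1 = (\<alpha>\<^sub>1 - \<alpha>\<^sub>2) g + \<alpha>\<^sub>2 z g'\<close>. The subordination and Schwarz's lemma bound the left side by
  \<open>R |z|\<close> with \<open>R = (C - D)/(1 - |D|)\<close>, and integrating this first-order Euler equation along rays
  gives \<open>|g(z)| \<le> R |z| / \<alpha>\<^sub>1 \<le> |z|/e\<close>. Hence \<open>|p'| \<le> 1/e\<close>, so \<open>|p - 1| < 1/e\<close>, and
  \<open>w = Ln p\<close> is a Schwarz function with \<open>p = exp \<circ> w\<close>.\<close>

lemma has_vector_derivative_powr_radial:
  fixes g :: "complex \<Rightarrow> complex" and c t :: real
  assumes hol: "g holomorphic_on unit_disk" and z: "z \<in> unit_disk" and t: "0 < t" "t < 1"
  shows "((\<lambda>s. of_real (s powr c) * g (of_real s * z)) has_vector_derivative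
           of_real (t powr (c - 1)) * (of_real c * g (of_real t * z)
             + of_real t * z * deriv g (of_real t * z))) (at t)"
proof -
  have tz: "norm (of_real t * z) < 1"
    using t z mult_left_le_one_le[of "norm z" t] by (simp add: norm_mult)
  have "(g has_field_derivative deriv g (of_real t * z)) (at (of_real t * z))"
    using hol tz by (auto intro: holomorphic_derivI)
  then have "((\<lambda>s. g (s * z)) has_field_derivative deriv g (of_real t * z) * z) (at (of_real t))"
    using DERIV_chain2[OF _ DERIV_cmult_right[OF DERIV_ident, of z "of_real t" UNIV]] by simp
  then have "((\<lambda>s. g (of_real s * z)) has_vector_derivative deriv g (of_real t * z) * z) (at t)"
    using has_vector_derivative_real_field by fastforce
  moreover have "((\<lambda>s. of_real (s powr c) :: complex) has_vector_derivative
      of_real (c * t powr (c - 1))) (at t)"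
    by (intro has_vector_derivative_of_real has_real_derivative_powr t)
  ultimately have "((\<lambda>s. of_real (s powr c) * g (of_real s * z)) has_vector_derivative
      of_real (t powr c) * (deriv g (of_real t * z) * z)
        + of_real (c * t powr (c - 1)) * g (of_real t * z)) (at t)"
    by (intro has_vector_derivative_mult)
  moreover have "t powr c = t powr (c - 1) * t"
    using t by (simp add: powr_diff)
  ultimately show ?thesis
    by (simp add: algebra_simps)
qed

lemma norm_le_of_euler_operator_bound:
  fixes g :: "complex \<Rightarrow> complex" and a b K :: real
  assumes hol: "g holomorphic_on unit_disk" and a: "a > 0" and b: "b > 0" and K: "K \<ge> 0"
    and bound: "\<And>u. u \<in> unit_disk \<Longrightarrow> norm (of_real b * g u + of_real a * u * deriv g u) \<le> K * norm u"
    and z: "z \<in> unit_disk"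
  shows "norm (g z) \<le> K * norm z / (a + b)"
proof (cases "g z = 0")
  case True
  then show ?thesis using a b K by simp
next
  case False
  have radial: "of_real t * z \<in> unit_disk" if "0 \<le> t" "t \<le> 1" for t
    using that z mult_left_le_one_le[of "norm z" t] by (simp add: norm_mult)
  define c where "c = b / a"
  have c: "c > 0" using a b by (simp add: c_def)
  define M where "M = norm (g z) * K * norm z / (a + b)"
  text \<open>With \<open>c = b/a\<close>, \<open>(t\<^sup>c g(t z))' = t\<^sup>c\<^sup>-\<^sup>1 (b g + a u g')(t z) / a\<close>; pairing with \<open>g z\<close>
    turns the bound on the Euler operator into a real differential inequality on \<open>[0, 1]\<close>.\<close>
  define \<Phi> where "\<Phi> t = Re (cnj (g z) * (of_real (t powr c) * g (of_real t * z))) - M * t powr (c + 1)" for t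
  have "\<Phi> 1 \<le> \<Phi> 0"
  proof (rule DERIV_nonpos_imp_decreasing_open[of 0 1 \<Phi>])
    fix t :: real assume t: "0 < t" "t < 1"
    define X where "X = of_real b * g (of_real t * z) + of_real a * (of_real t * z) * deriv g (of_real t * z)"
    have "((\<lambda>s. of_real (s powr c) * g (of_real s * z)) has_vector_derivative
        of_real (t powr (c - 1) / a) * X) (at t)"
      using has_vector_derivative_powr_radial[OF hol z t, of c] a
      by (simp add: X_def c_def field_simps)
    then have "(\<Phi> has_real_derivative
        Re (cnj (g z) * (of_real (t powr (c - 1) / a) * X)) - M * ((c + 1) * t powr c)) (at t)"
      unfolding \<Phi>_def
      using has_real_derivative_powr[OF t(1), of "c + 1"]
      by (intro DERIV_diff has_field_derivative_Re has_vector_derivative_mult_right DERIV_cmult) simp_all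
    moreover have "Re (cnj (g z) * (of_real (t powr (c - 1) / a) * X)) \<le> M * ((c + 1) * t powr c)"
    proof -
      have "Re (cnj (g z) * (of_real (t powr (c - 1) / a) * X))
          \<le> norm (cnj (g z) * (of_real (t powr (c - 1) / a) * X))"
        by (rule complex_Re_le_cmod)
      also have "\<dots> = norm (g z) * (t powr (c - 1) / a) * norm X"
        using a by (simp add: norm_mult norm_divide)
      also have "\<dots> \<le> norm (g z) * (t powr (c - 1) / a) * (K * (t * norm z))"
        using bound[OF radial] t a
        by (intro mult_left_mono) (simp_all add: X_def norm_mult)
      also have "\<dots> = M * ((c + 1) * t powr c)"
      proof -
        have "t powr c = t powr (c - 1) * t"
          using t by (simp add: powr_diff)
        moreover have "c + 1 = (a + b) / a"
          using a by (simp add: c_def field_simps)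
        ultimately show ?thesis
          using a b by (simp add: M_def field_simps)
      qed
      finally show ?thesis .
    qed
    ultimately show "\<exists>y. (\<Phi> has_real_derivative y) (at t) \<and> y \<le> 0"
      by force
  next
    have "continuous_on {0..1::real} (\<lambda>t. g (of_real t * z))"
      using radial
      by (intro continuous_on_compose2[OF holomorphic_on_imp_continuous_on[OF hol]] continuous_intros)
         auto
    then show "continuous_on {0..1} \<Phi>"
      unfolding \<Phi>_def using c
      by (intro continuous_intros continuous_on_powr') auto
  qed simp
  moreover have "\<Phi> 0 = 0" "\<Phi> 1 = norm (g z) ^ 2 - M"
    using c cmod_power2[of "g z"] by (simp_all add: \<Phi>_def power2_eq_square)
  ultimately have "norm (g z) * norm (g z) \<le> norm (g z) * (K * norm z / (a + b))"
    by (simp add: M_def power2_eq_square)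
  with False show ?thesis
    by (metis mult_le_cancel_left_pos zero_less_norm_iff)
qed

lemma deriv_mult_ident:
  assumes "h holomorphic_on S" "open S" "z \<in> S"
  shows "deriv (\<lambda>w. w * h w) z = h z + z * deriv h z"
  using DERIV_imp_deriv[OF DERIV_mult[OF DERIV_ident holomorphic_derivI[OF assms]]]
  by (simp add: mult.commute)

lemma higher_derivs_eq_logderiv:
  fixes f :: "complex \<Rightarrow> complex"
  assumes hol: "f holomorphic_on S" and S: "open S" and nz: "\<And>u. u \<in> S \<Longrightarrow> f u \<noteq> 0"
    and z: "z \<in> S"
  defines "q \<equiv> \<lambda>u. deriv f u / f u"
  shows "deriv (deriv f) z = (deriv q z + q z ^ 2) * f z"
    and "deriv (deriv (deriv f)) z = (deriv (deriv q) z + 3 * q z * deriv q z + q z ^ 3) * f z"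
proof -
  have holq: "q holomorphic_on S"
    using nz by (auto simp: q_def intro!: holomorphic_intros hol S)
  have df: "\<And>u. u \<in> S \<Longrightarrow> (f has_field_derivative deriv f u) (at u)"
    and dq: "\<And>u. u \<in> S \<Longrightarrow> (q has_field_derivative deriv q u) (at u)"
    and ddq: "\<And>u. u \<in> S \<Longrightarrow> (deriv q has_field_derivative deriv (deriv q) u) (at u)"
    using hol holq holomorphic_deriv[OF holq S] S by (auto intro: holomorphic_derivI)
  have f1: "deriv f u = q u * f u" if "u \<in> S" for u
    using nz that by (simp add: q_def)
  have f2: "deriv (deriv f) u = (deriv q u + q u ^ 2) * f u" if u: "u \<in> S" for u
  proof -
    have "deriv (deriv f) u = deriv (\<lambda>v. q v * f v) u"
      using hol holq S u f1
      by (intro complex_derivative_transform_within_open) (auto intro!: holomorphic_intros)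
    also have "\<dots> = deriv q u * f u + deriv f u * q u"
      by (rule DERIV_imp_deriv[OF DERIV_mult[OF dq[OF u] df[OF u]]])
    finally show ?thesis
      using f1[OF u] by (simp add: algebra_simps power2_eq_square)
  qed
  then show "deriv (deriv f) z = (deriv q z + q z ^ 2) * f z"
    using z .
  have "deriv (deriv (deriv f)) z = deriv (\<lambda>v. (deriv q v + q v ^ 2) * f v) z"
    using hol holq S z f2
    by (intro complex_derivative_transform_within_open) (auto intro!: holomorphic_intros)
  also have "\<dots> = (deriv (deriv q) z + 2 * q z * deriv q z) * f z + deriv f z * (deriv q z + q z ^ 2)"
    by (rule DERIV_imp_deriv) (rule derivative_eq_intros ddq[OF z] dq[OF z] df[OF z] refl | simp)+
  finally show "deriv (deriv (deriv f)) z = (deriv (deriv q) z + 3 * q z * deriv q z + q z ^ 3) * f z"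
    using f1[OF z] by (simp add: algebra_simps power2_eq_square power3_eq_cube)
qed

lemma holomorphic_pfun:
  assumes "f \<in> classA" and nz: "\<And>z. z \<in> unit_disk \<Longrightarrow> z \<noteq> 0 \<Longrightarrow> f z \<noteq> 0"
  shows "pfun f holomorphic_on unit_disk"
proof -
  have hol: "f holomorphic_on unit_disk" and f0: "f 0 = 0" and df0: "deriv f 0 = 1"
    using assms(1) by (auto simp: classA_def)
  define k where "k z = (if z = 0 then deriv f 0 else (f z - f 0) / (z - 0))" for z
  have holk: "k holomorphic_on unit_disk"
    unfolding k_def by (rule pole_lemma[OF hol]) simp
  have fk: "f = (\<lambda>z. z * k z)"
  proof
    show "f z = z * k z" for z
      using f0 by (simp add: k_def)
  qed
  have knz: "k z \<noteq> 0" if "z \<in> unit_disk" for z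
  proof (cases "z = 0")
    case True
    then show ?thesis
      using df0 by (simp add: k_def)
  next
    case False
    then show ?thesis
      using nz[OF that False] by (simp add: fk)
  qed
  have eq: "1 + z * deriv k z / k z = pfun f z" if z: "z \<in> unit_disk" for z
  proof -
    have "deriv f z = k z + z * deriv k z"
      unfolding fk by (rule deriv_mult_ident[OF holk open_ball z])
    then show ?thesis
      using knz[OF z] by (simp add: pfun_def fk field_simps)
  qed
  have "(\<lambda>z. 1 + z * deriv k z / k z) holomorphic_on unit_disk"
    using knz by (intro holomorphic_intros holomorphic_deriv[OF holk open_ball] holk) auto
  then show ?thesis
    using eq by (rule holomorphic_transform)
qed

lemma Yf_eq_pfun_derivs:
  assumes hol: "f holomorphic_on unit_disk" and nz: "\<And>z. z \<in> unit_disk \<Longrightarrow> z \<noteq> 0 \<Longrightarrow> f z \<noteq> 0"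
    and z: "z \<in> unit_disk"
  shows "Yf a1 a2 f z = 1 + of_real a1 * z * deriv (pfun f) z + of_real a2 * z^2 * deriv (deriv (pfun f)) z"
proof (cases "z = 0")
  case True
  then show ?thesis by (simp add: Yf_def)
next
  case False
  define S where "S = unit_disk - {0}"
  have S: "open S" "z \<in> S" and SB: "S \<subseteq> unit_disk" and nzS: "\<And>u. u \<in> S \<Longrightarrow> f u \<noteq> 0"
    using z False nz by (auto simp: S_def)
  define q where "q = (\<lambda>u. deriv f u / f u)"
  have holq: "q holomorphic_on S"
    unfolding q_def using holomorphic_on_subset[OF hol SB] S(1) nzS
    by (intro holomorphic_intros) auto
  have pq: "pfun f u = u * q u" if "u \<in> S" for u
    using that by (simp add: pfun_def q_def S_def)
  have holzq: "(\<lambda>u. u * q u) holomorphic_on S"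
    using holq by (intro holomorphic_intros)
  then have holp: "pfun f holomorphic_on S"
    by (rule holomorphic_transform) (simp add: pq)
  have "(deriv ^^ i) (pfun f) z = (deriv ^^ i) (\<lambda>u. u * q u) z" for i
    using pq by (intro higher_deriv_transform_within_open[OF holp holzq S])
  from this[of 1] this[of 2] have p_derivs:
    "deriv (pfun f) z = deriv (\<lambda>u. u * q u) z"
    "deriv (deriv (pfun f)) z = deriv (deriv (\<lambda>u. u * q u)) z"
    by (simp_all add: numeral_2_eq_2)
  have holdq: "deriv q holomorphic_on S"
    by (rule holomorphic_deriv[OF holq S(1)])
  have "deriv (deriv (\<lambda>u. u * q u)) z = deriv (\<lambda>u. q u + u * deriv q u) z"
  proof (rule complex_derivative_transform_within_open[OF _ _ S])
    show "deriv (\<lambda>u. u * q u) holomorphic_on S"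
      by (rule holomorphic_deriv[OF holzq S(1)])
    show "(\<lambda>u. q u + u * deriv q u) holomorphic_on S"
      by (intro holomorphic_intros holq holdq S(1))
  qed (rule deriv_mult_ident[OF holq S(1)])
  also have "\<dots> = deriv q z + deriv (\<lambda>u. u * deriv q u) z"
    using holq holdq S
    by (intro deriv_add holomorphic_on_imp_differentiable_at[OF _ S]) (auto intro!: holomorphic_intros)
  finally have p2: "deriv (deriv (pfun f)) z = 2 * deriv q z + z * deriv (deriv q) z"
    using p_derivs deriv_mult_ident[OF holdq S] by simp
  have p1: "deriv (pfun f) z = q z + z * deriv q z"
    using p_derivs deriv_mult_ident[OF holq S] by simp
  have A1: "z * deriv f z / f z = z * q z"
    by (simp add: q_def)
  have A2: "z^2 * (deriv ^^ 2) f z / f z = z^2 * (deriv q z + q z ^ 2)"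
    and A3: "z^3 * (deriv ^^ 3) f z / f z = z^3 * (deriv (deriv q) z + 3 * q z * deriv q z + q z ^ 3)"
    using higher_derivs_eq_logderiv[OF holomorphic_on_subset[OF hol SB] S(1) nzS S(2)] nzS[OF S(2)]
    by (simp_all add: q_def numeral_2_eq_2 numeral_3_eq_3)
  show ?thesis
    unfolding Yf_def Let_def if_not_P[OF False] A1 A2 A3 p1 p2
    by (simp add: algebra_simps power2_eq_square power3_eq_cube)
qed

lemma norm_minus_one_le_if_subordinate_Janowski:
  fixes C D :: real
  assumes sub: "subordinate h (\<lambda>z. (1 + of_real C * z) / (1 + of_real D * z))"
    and D: "\<bar>D\<bar> < 1" and z: "z \<in> unit_disk"
  shows "norm (h z - 1) \<le> \<bar>C - D\<bar> / (1 - \<bar>D\<bar>) * norm z"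
proof -
  obtain w where w: "w holomorphic_on unit_disk" "w 0 = 0" "\<forall>z\<in>unit_disk. norm (w z) < 1"
    and hw: "\<forall>z\<in>unit_disk. h z = (1 + of_real C * w z) / (1 + of_real D * w z)"
    using sub unfolding subordinate_def by blast
  have wz: "norm (w z) \<le> norm z"
    using Schwarz_Lemma(1)[of w z] w z by auto
  have "1 - \<bar>D\<bar> \<le> 1 - norm (of_real D * w z)"
    using w z mult_right_le_one_le[of "\<bar>D\<bar>" "norm (w z)"] by (simp add: norm_mult less_imp_le)
  also have "\<dots> \<le> norm (1 + of_real D * w z)"
    using norm_triangle_ineq2[of 1 "- (of_real D * w z)"] by (simp add: norm_minus_commute)
  finally have den: "1 - \<bar>D\<bar> \<le> norm (1 + of_real D * w z)" .
  then have "1 + of_real D * w z \<noteq> 0"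
    using D by auto
  then have "h z - 1 = of_real (C - D) * w z / (1 + of_real D * w z)"
    using hw z by (simp add: field_simps)
  then have "norm (h z - 1) = \<bar>C - D\<bar> * norm (w z) / norm (1 + of_real D * w z)"
    by (simp add: norm_mult norm_divide flip: of_real_diff)
  also have "\<dots> \<le> \<bar>C - D\<bar> * norm (w z) / (1 - \<bar>D\<bar>)"
    using den D by (intro divide_left_mono mult_pos_pos) auto
  also have "\<dots> \<le> \<bar>C - D\<bar> * norm z / (1 - \<bar>D\<bar>)"
    using wz D by (intro divide_right_mono mult_left_mono) auto
  finally show ?thesis
    by simp
qed

lemma norm_diff_le_if_norm_radial_deriv_le:
  assumes hol: "p holomorphic_on unit_disk"
    and bound: "\<And>u. u \<in> unit_disk \<Longrightarrow> norm (u * deriv p u) \<le> K * norm u"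
    and z: "z \<in> unit_disk"
  shows "norm (p z - p 0) \<le> K * norm z"
proof -
  have punctured: "norm (deriv p u) \<le> K" if "u \<in> unit_disk" "u \<noteq> 0" for u
    using bound[OF that(1)] that(2) by (simp add: norm_mult)
  have "norm (deriv p u) \<le> K" if u: "u \<in> unit_disk" for u
  proof (cases "u = 0")
    case True
    have "isCont (deriv p) 0"
      using holomorphic_deriv[OF hol] by (auto intro: continuous_on_interior holomorphic_on_imp_continuous_on)
    then have "(deriv p \<longlongrightarrow> deriv p 0) (at 0)"
      by (simp add: isCont_def)
    moreover have "eventually (\<lambda>x. norm (deriv p x) \<le> K) (at 0)"
      unfolding eventually_at by (rule exI[of _ 1]) (auto intro!: punctured)
    ultimately show ?thesis
      using Lim_norm_ubound[OF trivial_limit_at] True by blast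
  qed (use punctured u in auto)
  then have "norm (p z - p 0) \<le> K * norm (z - 0)"
    using hol z by (intro field_differentiable_bound[of unit_disk]) (auto intro: holomorphic_derivI)
  then show ?thesis
    by simp
qed

lemma subordinate_exp_if_norm_minus_one_le:
  fixes K :: real
  assumes hol: "p holomorphic_on unit_disk" and p0: "p 0 = 1" and K: "K \<le> 1/2"
    and bound: "\<And>z. z \<in> unit_disk \<Longrightarrow> norm (p z - 1) \<le> K * norm z"
  shows "subordinate p exp"
  unfolding subordinate_def
proof (intro exI[of _ "\<lambda>z. Ln (p z)"] conjI ballI)
  have near_one: "norm (p z - 1) < 1/2" if "z \<in> unit_disk" for z
  proof -
    have "0 \<le> K * norm z"
      using bound[OF that] by (meson norm_ge_zero order_trans)
    then have "K * norm z \<le> 1/2 * norm z"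
      using K by (intro mult_right_mono) (auto simp: zero_le_mult_iff)
    then show ?thesis
      using bound[OF that] that by simp
  qed
  then have "p z \<notin> \<real>\<^sub>\<le>\<^sub>0" if "z \<in> unit_disk" for z
    using near_one[OF that] abs_Re_le_cmod[of "p z - 1"] by (auto simp: complex_nonpos_Reals_iff)
  then show "(\<lambda>z. Ln (p z)) holomorphic_on unit_disk"
    using hol by (rule holomorphic_on_Ln')
  fix z assume z: "z \<in> unit_disk"
  have "norm (Ln (p z)) \<le> 2 * norm (p z - 1)"
    using norm_Ln_le[of "p z - 1"] near_one[OF z] by simp
  then show "norm (Ln (p z)) < 1"
    using near_one[OF z] by simp
  have "p z \<noteq> 0"
    using near_one[OF z] by auto
  then show "p z = exp (Ln (p z))"
    by simp
qed (simp add: p0)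

lemma norm_radial_deriv_pfun_le:
  fixes a1 a2 R :: real
  assumes f: "f \<in> classA" and nz: "\<And>z. z \<in> unit_disk \<Longrightarrow> z \<noteq> 0 \<Longrightarrow> f z \<noteq> 0"
    and a: "0 < a2" "a2 < a1" and R: "0 \<le> R"
    and Y: "\<And>u. u \<in> unit_disk \<Longrightarrow> norm (Yf a1 a2 f u - 1) \<le> R * norm u"
    and z: "z \<in> unit_disk"
  shows "norm (z * deriv (pfun f) z) \<le> R / a1 * norm z"
proof -
  have hol: "f holomorphic_on unit_disk"
    using f by (simp add: classA_def)
  have holdp: "deriv (pfun f) holomorphic_on unit_disk"
    by (rule holomorphic_deriv[OF holomorphic_pfun[OF f nz] open_ball])
  define g where "g = (\<lambda>z. z * deriv (pfun f) z)"
  have holg: "g holomorphic_on unit_disk"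
    unfolding g_def by (intro holomorphic_intros holdp)
  have "Yf a1 a2 f u - 1 = of_real (a1 - a2) * g u + of_real a2 * u * deriv g u"
    if u: "u \<in> unit_disk" for u
    using Yf_eq_pfun_derivs[OF hol nz u] deriv_mult_ident[OF holdp _ u]
    by (simp add: g_def algebra_simps power2_eq_square)
  then have "norm (g z) \<le> R * norm z / (a2 + (a1 - a2))"
    using a Y by (intro norm_le_of_euler_operator_bound[OF holg _ _ R _ z]) auto
  then show ?thesis
    by (simp add: g_def)
qed

lemma Janowski_radius_le_coefficient_gap:
  fixes C D a1 a2 :: real
  assumes "-1 < D" "D < C" "C \<le> 1"
    and gap: "(a1 - a2) * (1 - D^2) \<ge> exp 1 * (C - D) * (1 + \<bar>D\<bar>)"
  shows "a2 < a1" and "(C - D) / (1 - \<bar>D\<bar>) \<le> (a1 - a2) / exp 1"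
proof -
  have D: "\<bar>D\<bar> < 1"
    using assms(1-3) by auto
  have "1 - D^2 = (1 + \<bar>D\<bar>) * (1 - \<bar>D\<bar>)"
    by (simp add: algebra_simps power2_eq_square)
  with gap have "(1 + \<bar>D\<bar>) * (exp 1 * (C - D)) \<le> (1 + \<bar>D\<bar>) * ((a1 - a2) * (1 - \<bar>D\<bar>))"
    by (simp add: mult_ac)
  then have "exp 1 * (C - D) \<le> (a1 - a2) * (1 - \<bar>D\<bar>)"
    by (simp add: mult_le_cancel_left_pos)
  moreover have "exp 1 * (C - D) > 0"
    using assms(2) by simp
  ultimately have "0 < (a1 - a2) * (1 - \<bar>D\<bar>)"
    by linarith
  then show "a2 < a1"
    using D by (simp add: zero_less_mult_iff)
  show "(C - D) / (1 - \<bar>D\<bar>) \<le> (a1 - a2) / exp 1"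
    using \<open>exp 1 * (C - D) \<le> (a1 - a2) * (1 - \<bar>D\<bar>)\<close> D by (simp add: field_simps)
qed

theorem corollary4p2:
  fixes C D a1 a2 :: real and f :: "complex \<Rightarrow> complex"
  assumes "-1 < D" "D < C" "C \<le> 1"
    and "a1 > 0" "a2 > 0"
    and "(a1 - a2) * (1 - D^2) \<ge> exp 1 * (C - D) * (1 + \<bar>D\<bar>)"
    and "f \<in> classA"
    and "\<forall>z. 0 < norm z \<and> norm z < 1 \<longrightarrow> f z \<noteq> 0"
    and "subordinate (Yf a1 a2 f) (\<lambda>z. (1 + of_real C * z) / (1 + of_real D * z))"
  shows "f \<in> starlike_exp"
proof -
  have nz: "\<And>z. z \<in> unit_disk \<Longrightarrow> z \<noteq> 0 \<Longrightarrow> f z \<noteq> 0"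
    using assms(8) by simp
  have holp: "pfun f holomorphic_on unit_disk" and p0: "pfun f 0 = 1"
    using holomorphic_pfun[OF assms(7) nz] by (simp_all add: pfun_def)
  define R where "R = (C - D) / (1 - \<bar>D\<bar>)"
  have R: "0 \<le> R" "R \<le> (a1 - a2) / exp 1" and "a2 < a1"
    using Janowski_radius_le_coefficient_gap[OF assms(1-3,6)] assms(1-3) by (auto simp: R_def)
  have "norm (Yf a1 a2 f u - 1) \<le> R * norm u" if "u \<in> unit_disk" for u
    using norm_minus_one_le_if_subordinate_Janowski[OF assms(9) _ that] assms(1-3) by (simp add: R_def)
  then have "norm (u * deriv (pfun f) u) \<le> R / a1 * norm u" if "u \<in> unit_disk" for u
    using norm_radial_deriv_pfun_le[OF assms(7) nz assms(5) \<open>a2 < a1\<close> R(1) _ that] by blast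
  then have "norm (pfun f z - 1) \<le> R / a1 * norm z" if "z \<in> unit_disk" for z
    using norm_diff_le_if_norm_radial_deriv_le[OF holp, where K = "R / a1"] that p0 by simp
  moreover have "R / a1 \<le> 1 / 2"
  proof -
    have "R * 2 \<le> R * exp 1"
      using R(1) exp_ge_add_one_self[of 1] by (intro mult_left_mono) auto
    then show ?thesis
      using R(2) assms(4,5) by (simp add: field_simps)
  qed
  ultimately have "subordinate (pfun f) exp"
    by (intro subordinate_exp_if_norm_minus_one_le[OF holp p0])
  then show ?thesis
    using assms(7) by (simp add: starlike_exp_def)
qed

end
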